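(* Fix $0\le p_d,p_c\le1$. Let $\tilde{\mathcal{C}}(p_d,p_c)$ be the capacity region (with no CSIT) of any two-user binary fading interference channel $\tilde Y_i[t] = \tilde G_{ii}[t]\tilde X_i[t]\oplus \tilde G_{\bar i i}[t]\tilde X_{\bar i}[t]$, $i=1,2$, whose channel gain vectors $(\tilde G_{11}[t],\tilde G_{12}[t],\tilde G_{21}[t],\tilde G_{22}[t])$ are independent and identically distributed over time, arbitrarily correlated with each other at a given time, subject to: for $i=1,2$, $\Pr(\tilde G_{ii}[t]=1)=p_d$, $\Pr(\tilde G_{\bar i i}[t]=1)=p_c$, and $\Pr(\tilde G_{ii}[t]=1,\tilde G_{\bar i i}[t]=1)=\Pr(\tilde G_{ii}[t]=1)\Pr(\tilde G_{\bar i i}[t]=1)$. Then $\mathcal{C}(p_d,p_c)\subseteq\tilde{\mathcal{C}}(p_d,p_c)$, where $\mathcal{C}(p_d,p_c)$ is the capacity region of the two-user BFIC with no CSIT with mutually independent gains.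
   Context: Two-user BFIC: at each time $t$, ${\sf Tx}_i$ sends $X_i[t]\in\{0,1\}$ and ${\sf Rx}_i$ receives $Y_i[t] = G_{ii}[t]X_i[t] \oplus G_{\bar i i}[t] X_{\bar i}[t]$, $\bar i=3-i$, arithmetic in $\mathbb{F}_2$; gains $G_{ij}[t]$ (from ${\sf Tx}_i$ to ${\sf Rx}_j$) are mutually independent Bernoulli, independent over time, $G_{ii}[t]\sim\mathcal{B}(p_d)$, $G_{i\bar i}[t]\sim\mathcal{B}(p_c)$. For either channel (original or correlated), ${\sf Tx}_i$ sends a uniform message $W_i\in\{1,\dots,2^{nR_i}\}$, messages and gains are mutually independent, encoding is $X_i[t]=f_{i,t}(W_i)$ (no CSIT), and ${\sf Rx}_i$ decodes using its received sequence and the gains of its two incoming links, $\hat W_i=\varphi_i(Y_i^n,G_{ii}^n,G_{\bar i i}^n)$. $(R_1,R_2)$ is achievable if the average error probabilities at both receivers vanish as $n\to\infty$; the capacity region is the closure of achievable pairs. *)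

theory Defs
  imports "HOL-Probability.Probability"
begin

text \<open>A gain vector at one time instant: (G11, G12, G21, G22), where Gij is the
gain of the link from Tx i to Rx j.\<close>
type_synonym gain = "bool \<times> bool \<times> bool \<times> bool"

definition g11 :: "gain \<Rightarrow> bool" where "g11 g = fst g"
definition g12 :: "gain \<Rightarrow> bool" where "g12 g = fst (snd g)"
definition g21 :: "gain \<Rightarrow> bool" where "g21 g = fst (snd (snd g))"
definition g22 :: "gain \<Rightarrow> bool" where "g22 g = snd (snd (snd g))"

definition indep_gains :: "real \<Rightarrow> real \<Rightarrow> gain pmf" where
  "indep_gains pd pc =
     pair_pmf (bernoulli_pmf pd) (pair_pmf (bernoulli_pmf pc)
       (pair_pmf (bernoulli_pmf pc) (bernoulli_pmf pd)))"

definition msg_size :: "real \<Rightarrow> nat \<Rightarrow> nat" where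
  "msg_size R n = nat \<lceil>2 powr (real n * R)\<rceil>"

definition seq_prob :: "gain pmf \<Rightarrow> gain list \<Rightarrow> real" where
  "seq_prob Q gs = prod_list (map (pmf Q) gs)"

text \<open>Received sequences (multiplication = conjunction, addition = xor).\<close>
definition rx1 :: "nat \<Rightarrow> gain list \<Rightarrow> (nat \<Rightarrow> bool) \<Rightarrow> (nat \<Rightarrow> bool) \<Rightarrow> bool list" where
  "rx1 n gs x1 x2 = map (\<lambda>t. (g11 (gs ! t) \<and> x1 t) \<noteq> (g21 (gs ! t) \<and> x2 t)) [0..<n]"

definition rx2 :: "nat \<Rightarrow> gain list \<Rightarrow> (nat \<Rightarrow> bool) \<Rightarrow> (nat \<Rightarrow> bool) \<Rightarrow> bool list" where
  "rx2 n gs x1 x2 = map (\<lambda>t. (g22 (gs ! t) \<and> x2 t) \<noteq> (g12 (gs ! t) \<and> x1 t)) [0..<n]"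

text \<open>Average error probabilities of a code of block length n with M1, M2 messages
(messages 0..<Mi, uniform), encoders f_i w t (no CSIT), and decoders that see the
received sequence and the gains of the two incoming links.\<close>
definition err1 ::
  "gain pmf \<Rightarrow> nat \<Rightarrow> nat \<Rightarrow> nat \<Rightarrow> (nat \<Rightarrow> nat \<Rightarrow> bool) \<Rightarrow> (nat \<Rightarrow> nat \<Rightarrow> bool)
   \<Rightarrow> (bool list \<Rightarrow> bool list \<Rightarrow> bool list \<Rightarrow> nat) \<Rightarrow> real" where
  "err1 Q n M1 M2 f1 f2 \<phi>1 =
     (\<Sum>w1<M1. \<Sum>w2<M2. \<Sum>gs\<in>{gs. length gs = n}.
        seq_prob Q gs *
        (if \<phi>1 (rx1 n gs (f1 w1) (f2 w2)) (map g11 gs) (map g21 gs) = w1 then 0 else 1))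
     / (real M1 * real M2)"

definition err2 ::
  "gain pmf \<Rightarrow> nat \<Rightarrow> nat \<Rightarrow> nat \<Rightarrow> (nat \<Rightarrow> nat \<Rightarrow> bool) \<Rightarrow> (nat \<Rightarrow> nat \<Rightarrow> bool)
   \<Rightarrow> (bool list \<Rightarrow> bool list \<Rightarrow> bool list \<Rightarrow> nat) \<Rightarrow> real" where
  "err2 Q n M1 M2 f1 f2 \<phi>2 =
     (\<Sum>w1<M1. \<Sum>w2<M2. \<Sum>gs\<in>{gs. length gs = n}.
        seq_prob Q gs *
        (if \<phi>2 (rx2 n gs (f1 w1) (f2 w2)) (map g22 gs) (map g12 gs) = w2 then 0 else 1))
     / (real M1 * real M2)"

definition achievable :: "gain pmf \<Rightarrow> real \<Rightarrow> real \<Rightarrow> bool" where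
  "achievable Q R1 R2 \<longleftrightarrow> R1 \<ge> 0 \<and> R2 \<ge> 0 \<and>
     (\<exists>f1 f2 :: nat \<Rightarrow> nat \<Rightarrow> nat \<Rightarrow> bool.
      \<exists>\<phi>1 \<phi>2 :: nat \<Rightarrow> bool list \<Rightarrow> bool list \<Rightarrow> bool list \<Rightarrow> nat.
        (\<lambda>n. err1 Q n (msg_size R1 n) (msg_size R2 n) (f1 n) (f2 n) (\<phi>1 n)) \<longlonglongrightarrow> 0 \<and>
        (\<lambda>n. err2 Q n (msg_size R1 n) (msg_size R2 n) (f1 n) (f2 n) (\<phi>2 n)) \<longlonglongrightarrow> 0)"

definition capacity_region :: "gain pmf \<Rightarrow> (real \<times> real) set" where
  "capacity_region Q = closure {(R1, R2). achievable Q R1 R2}"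

end

theory Submission imports Defs begin

text \<open>Receiver i only ever sees its incoming gain pair (G_ii, G_ji), j the other user: its received
sequence and its side information are functions of the sequence of these pairs, so its error
probability, as an average over n i.i.d. gain vectors, depends on the joint gain law only through
the law of that pair. For two Boolean variables with the prescribed marginals, the product rule
for P(G_ii = 1, G_ji = 1) forces the pair to be independent, i.e. to have the same law as in
the BFIC with mutually independent gains. Both channels therefore share every code's error
probabilities, hence achievable rates and capacity region.\<close>

definition incoming1 :: "gain \<Rightarrow> bool \<times> bool" where
  "incoming1 g = (g11 g, g21 g)"

definition incoming2 :: "gain \<Rightarrow> bool \<times> bool" where
  "incoming2 g = (g22 g, g12 g)"

text \<open>Each pair is (direct gain, cross gain); x is the receiver's own input, y the interfering one.\<close>
definition received :: "nat \<Rightarrow> (bool \<times> bool) list \<Rightarrow> (nat \<Rightarrow> bool) \<Rightarrow> (nat \<Rightarrow> bool) \<Rightarrow> bool list" where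
  "received n ls x y = map (\<lambda>t. (fst (ls ! t) \<and> x t) \<noteq> (snd (ls ! t) \<and> y t)) [0..<n]"

lemma rx1_eq_received: "length gs = n \<Longrightarrow> rx1 n gs x1 x2 = received n (map incoming1 gs) x1 x2"
  by (auto simp: rx1_def received_def incoming1_def)

lemma rx2_eq_received: "length gs = n \<Longrightarrow> rx2 n gs x1 x2 = received n (map incoming2 gs) x2 x1"
  by (auto simp: rx2_def received_def incoming2_def)

lemma sum_lists_length_Suc:
  fixes f :: "'a::finite list \<Rightarrow> 'b::comm_monoid_add"
  shows "(\<Sum>xs\<in>{xs. length xs = Suc n}. f xs) = (\<Sum>x\<in>UNIV. \<Sum>xs\<in>{xs. length xs = n}. f (x # xs))"
proof -
  have split: "{xs::'a list. length xs = Suc n} = (\<lambda>(x, xs). x # xs) ` (UNIV \<times> {xs. length xs = n})"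
    by (auto simp: image_iff length_Suc_conv)
  have "inj_on (\<lambda>(x, xs). x # xs) (UNIV \<times> {xs::'a list. length xs = n})"
    by (auto simp: inj_on_def)
  then show ?thesis
    unfolding split by (simp add: sum.reindex sum.cartesian_product split_def)
qed

lemma sum_pmf_map_pmf:
  fixes Q :: "'a::finite pmf" and h :: "'a \<Rightarrow> 'b::finite" and G :: "'b \<Rightarrow> real"
  shows "(\<Sum>x\<in>UNIV. pmf Q x * G (h x)) = (\<Sum>y\<in>UNIV. pmf (map_pmf h Q) y * G y)"
proof -
  have "(\<Sum>x\<in>UNIV. pmf Q x * G (h x)) = measure_pmf.expectation Q (\<lambda>x. G (h x))"
    by (subst integral_measure_pmf_real[where A = UNIV]) (auto simp: mult.commute)
  also have "\<dots> = measure_pmf.expectation (map_pmf h Q) G"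
    by simp
  also have "\<dots> = (\<Sum>y\<in>UNIV. pmf (map_pmf h Q) y * G y)"
    by (subst integral_measure_pmf_real[where A = UNIV]) (auto simp: mult.commute)
  finally show ?thesis .
qed

lemma sum_iid_map_pmf:
  fixes Q :: "'a::finite pmf" and h :: "'a \<Rightarrow> 'b::finite" and F :: "'b list \<Rightarrow> real"
  shows "(\<Sum>xs\<in>{xs. length xs = n}. prod_list (map (pmf Q) xs) * F (map h xs))
       = (\<Sum>ys\<in>{ys. length ys = n}. prod_list (map (pmf (map_pmf h Q)) ys) * F ys)"
proof (induction n arbitrary: F)
  case 0
  then show ?case by simp
next
  case (Suc n)
  let ?Qh = "map_pmf h Q"
  have "(\<Sum>xs\<in>{xs. length xs = Suc n}. prod_list (map (pmf Q) xs) * F (map h xs))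
      = (\<Sum>x\<in>UNIV. pmf Q x *
           (\<Sum>xs\<in>{xs. length xs = n}. prod_list (map (pmf Q) xs) * F (h x # map h xs)))"
    by (simp add: sum_lists_length_Suc sum_distrib_left mult.assoc)
  also have "\<dots> = (\<Sum>x\<in>UNIV. pmf Q x *
           (\<Sum>ys\<in>{ys. length ys = n}. prod_list (map (pmf ?Qh) ys) * F (h x # ys)))"
    using Suc.IH[of "\<lambda>ys. F (h _ # ys)"] by simp
  also have "\<dots> = (\<Sum>y\<in>UNIV. pmf ?Qh y *
           (\<Sum>ys\<in>{ys. length ys = n}. prod_list (map (pmf ?Qh) ys) * F (y # ys)))"
    by (rule sum_pmf_map_pmf)
  also have "\<dots> = (\<Sum>ys\<in>{ys. length ys = Suc n}. prod_list (map (pmf ?Qh) ys) * F ys)"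
    by (simp add: sum_lists_length_Suc sum_distrib_left mult.assoc)
  finally show ?case .
qed

lemma sum_seq_prob_cong_map_pmf:
  fixes h :: "gain \<Rightarrow> 'b::finite"
  assumes "map_pmf h Q = map_pmf h Q'"
  shows "(\<Sum>gs\<in>{gs. length gs = n}. seq_prob Q gs * F (map h gs))
       = (\<Sum>gs\<in>{gs. length gs = n}. seq_prob Q' gs * F (map h gs))"
  using sum_iid_map_pmf[where Q = Q and h = h and F = F]
    sum_iid_map_pmf[where Q = Q' and h = h and F = F]
  unfolding seq_prob_def assms by simp

lemma err1_cong_incoming1:
  assumes "map_pmf incoming1 Q = map_pmf incoming1 Q'"
  shows "err1 Q n M1 M2 f1 f2 \<phi> = err1 Q' n M1 M2 f1 f2 \<phi>"
proof -
  define miss where "miss w1 w2 ls =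
    (if \<phi> (received n ls (f1 w1) (f2 w2)) (map fst ls) (map snd ls) = w1 then 0 else 1 :: real)"
    for w1 w2 ls
  have "(\<Sum>gs\<in>{gs. length gs = n}. seq_prob P gs *
          (if \<phi> (rx1 n gs (f1 w1) (f2 w2)) (map g11 gs) (map g21 gs) = w1 then 0 else 1))
      = (\<Sum>gs\<in>{gs. length gs = n}. seq_prob P gs * miss w1 w2 (map incoming1 gs))" for P w1 w2
    by (intro sum.cong) (auto simp: miss_def rx1_eq_received incoming1_def o_def)
  then show ?thesis
    unfolding err1_def by (simp add: sum_seq_prob_cong_map_pmf[OF assms])
qed

lemma err2_cong_incoming2:
  assumes "map_pmf incoming2 Q = map_pmf incoming2 Q'"
  shows "err2 Q n M1 M2 f1 f2 \<phi> = err2 Q' n M1 M2 f1 f2 \<phi>"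
proof -
  define miss where "miss w1 w2 ls =
    (if \<phi> (received n ls (f2 w2) (f1 w1)) (map fst ls) (map snd ls) = w2 then 0 else 1 :: real)"
    for w1 w2 ls
  have "(\<Sum>gs\<in>{gs. length gs = n}. seq_prob P gs *
          (if \<phi> (rx2 n gs (f1 w1) (f2 w2)) (map g22 gs) (map g12 gs) = w2 then 0 else 1))
      = (\<Sum>gs\<in>{gs. length gs = n}. seq_prob P gs * miss w1 w2 (map incoming2 gs))" for P w1 w2
    by (intro sum.cong) (auto simp: miss_def rx2_eq_received incoming2_def o_def)
  then show ?thesis
    unfolding err2_def by (simp add: sum_seq_prob_cong_map_pmf[OF assms])
qed

lemma capacity_region_cong_incoming:
  assumes "map_pmf incoming1 Q = map_pmf incoming1 Q'"
    and "map_pmf incoming2 Q = map_pmf incoming2 Q'"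
  shows "capacity_region Q = capacity_region Q'"
proof -
  have "achievable Q = achievable Q'"
    by (intro ext) (simp add: achievable_def err1_cong_incoming1[OF assms(1)]
        err2_cong_incoming2[OF assms(2)])
  then show ?thesis
    by (simp add: capacity_region_def)
qed

lemma map_pmf_pair_eq_pair_bernoulli:
  fixes Q :: "'a pmf"
  assumes "measure_pmf.prob Q {x. A x} = a" "measure_pmf.prob Q {x. B x} = b"
    and "measure_pmf.prob Q {x. A x \<and> B x} = a * b"
    and "0 \<le> a" "a \<le> 1" "0 \<le> b" "b \<le> 1"
  shows "map_pmf (\<lambda>x. (A x, B x)) Q = pair_pmf (bernoulli_pmf a) (bernoulli_pmf b)"
proof (rule pmf_eqI)
  fix z :: "bool \<times> bool"
  obtain u v where z: "z = (u, v)" by (cases z)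
  have A_notB: "measure_pmf.prob Q {x. A x \<and> \<not> B x} = a - a * b"
  proof -
    have "{x. A x \<and> \<not> B x} = {x. A x} - {x. A x \<and> B x}" by auto
    then show ?thesis using assms by (simp add: measure_pmf.finite_measure_Diff subset_eq)
  qed
  have notA_B: "measure_pmf.prob Q {x. \<not> A x \<and> B x} = b - a * b"
  proof -
    have "{x. \<not> A x \<and> B x} = {x. B x} - {x. A x \<and> B x}" by auto
    then show ?thesis using assms by (simp add: measure_pmf.finite_measure_Diff subset_eq)
  qed
  have notA_notB: "measure_pmf.prob Q {x. \<not> A x \<and> \<not> B x} = 1 - a - b + a * b"
  proof -
    have "{x. \<not> A x \<and> \<not> B x} = UNIV - {x. B x} - {x. A x \<and> \<not> B x}" by auto
    moreover have "measure_pmf.prob Q (UNIV - {x. B x}) = 1 - b"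
      using assms by (simp add: measure_pmf.prob_compl[of "{x. B x}", simplified])
    ultimately show ?thesis
      using A_notB assms by (simp add: measure_pmf.finite_measure_Diff subset_eq)
  qed
  have "pmf (map_pmf (\<lambda>x. (A x, B x)) Q) (u, v) = measure_pmf.prob Q {x. A x = u \<and> B x = v}"
    by (simp add: pmf_map vimage_def)
  then show "pmf (map_pmf (\<lambda>x. (A x, B x)) Q) z = pmf (pair_pmf (bernoulli_pmf a) (bernoulli_pmf b)) z"
    using assms A_notB notA_B notA_notB unfolding z
    by (cases u; cases v) (simp_all add: pmf_pair algebra_simps)
qed

lemma map_incoming1_indep_gains:
  "map_pmf incoming1 (indep_gains pd pc) = pair_pmf (bernoulli_pmf pd) (bernoulli_pmf pc)"
proof -
  have incoming1_eq: "incoming1 = (\<lambda>(a, b). (id a, (fst \<circ> snd) b))"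
    by (auto simp: incoming1_def g11_def g21_def)
  show ?thesis
    unfolding indep_gains_def incoming1_eq map_pair
    by (simp add: map_pmf_comp[symmetric] map_fst_pair_pmf map_snd_pair_pmf)
qed

lemma map_incoming2_indep_gains:
  "map_pmf incoming2 (indep_gains pd pc) = pair_pmf (bernoulli_pmf pd) (bernoulli_pmf pc)"
proof -
  have incoming2_eq: "incoming2 = (\<lambda>(a, b). (b, a)) \<circ> (\<lambda>(a, b). (id a, snd b)) \<circ> snd"
    by (auto simp: incoming2_def g22_def g12_def)
  have "map_pmf incoming2 (indep_gains pd pc)
      = map_pmf (\<lambda>(a, b). (b, a)) (pair_pmf (bernoulli_pmf pc) (bernoulli_pmf pd))"
    unfolding indep_gains_def incoming2_eq pmf.map_comp[symmetric]
    by (simp add: map_snd_pair_pmf map_pair)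
  then show ?thesis
    by (simp add: pair_commute_pmf[of "bernoulli_pmf pd"])
qed

theorem lemma2:
  fixes pd pc :: real and Q :: "gain pmf"
  assumes "0 \<le> pd" "pd \<le> 1" "0 \<le> pc" "pc \<le> 1"
    and "measure_pmf.prob Q {g. g11 g} = pd" "measure_pmf.prob Q {g. g22 g} = pd"
    and "measure_pmf.prob Q {g. g21 g} = pc" "measure_pmf.prob Q {g. g12 g} = pc"
    and "measure_pmf.prob Q {g. g11 g \<and> g21 g} =
           measure_pmf.prob Q {g. g11 g} * measure_pmf.prob Q {g. g21 g}"
    and "measure_pmf.prob Q {g. g22 g \<and> g12 g} =
           measure_pmf.prob Q {g. g22 g} * measure_pmf.prob Q {g. g12 g}"
  shows "capacity_region (indep_gains pd pc) \<subseteq> capacity_region Q"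
proof -
  have "map_pmf incoming1 Q = map_pmf incoming1 (indep_gains pd pc)"
    unfolding map_incoming1_indep_gains unfolding incoming1_def
    by (rule map_pmf_pair_eq_pair_bernoulli) (use assms in auto)
  moreover have "map_pmf incoming2 Q = map_pmf incoming2 (indep_gains pd pc)"
    unfolding map_incoming2_indep_gains unfolding incoming2_def
    by (rule map_pmf_pair_eq_pair_bernoulli) (use assms in auto)
  ultimately have "capacity_region Q = capacity_region (indep_gains pd pc)"
    by (rule capacity_region_cong_incoming)
  then show ?thesis
    by simp
qed

end
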